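(* Under the hypotheses and definitions below, for all $0\le l,m\le N-1$, $$\sum_{n\in\mathbb Z}\phi_l(n)\psi_m(n)=\delta_{l,m}.$$
   Context: Fix $0<q<1$, $N\ge1$, $t>0$, $0\le\alpha_i<a_j\le1$ for all $i,j$; $(x;q)_\infty=\prod_{k\ge0}(1-xq^k)$. Constants $b,c$ with $\max_i\alpha_i<b<\min_ia_i\le1<c$; $\tau(n)=b^n$ for $n\ge0$, $\tau(n)=c^n$ for $n<0$. $\phi_l(n)=\tau(n)\frac{1}{2\pi i}\oint_Ddv\,\frac{e^{-vt}}{v^{n+N}}\frac{1}{v-a_{l+1}}\prod_{j=1}^l\frac{v-\alpha_j}{v-a_j}\prod_{k=1}^N\frac{(q\alpha_k/v;q)_\infty}{(qv/a_k;q)_\infty}$ and $\psi_l(n)=\frac{a_{l+1}-\alpha_{l+1}}{\tau(n)}\frac{1}{2\pi i}\oint_{C_r}\frac{dz}{z}\frac{e^{zt}z^{n+N}}{z-\alpha_{l+1}}\prod_{j=1}^l\frac{z-a_j}{z-\alpha_j}\prod_{k=1}^N\frac{(qz/a_k;q)_\infty}{(q\alpha_k/z;q)_\infty}$, where $D$ is a positively oriented contour enclosing $a_1,\dots,a_N$ but not $0$ nor $a_kq^{-j}$ ($j\ge1$), and $C_r$ a positively oriented contour enclosing $0$ and all $\alpha_iq^j$ ($j\ge0$). *)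

theory Defs
  imports "HOL-Analysis.Analysis"
begin

definition cint :: "(real \<Rightarrow> complex) \<Rightarrow> (complex \<Rightarrow> complex) \<Rightarrow> complex" where
  "cint g f = integral {0..1} (\<lambda>x. f (g x) * vector_derivative g (at x within {0..1}))"

definition wn :: "(real \<Rightarrow> complex) \<Rightarrow> complex \<Rightarrow> complex" where
  "wn g z = cint g (\<lambda>w. 1 / (w - z)) / (2 * pi * \<i>)"

definition qpoch :: "complex \<Rightarrow> real \<Rightarrow> complex" where
  "qpoch x q = (\<Prod>k. 1 - x * of_real q ^ k)"

definition tau :: "real \<Rightarrow> real \<Rightarrow> int \<Rightarrow> real" where
  "tau b c n = (if n \<ge> 0 then b powi n else c powi n)"

text \<open>phi_l(n); a, al are indexed 1..N.\<close>
definition phi :: "real \<Rightarrow> nat \<Rightarrow> real \<Rightarrow> (nat \<Rightarrow> real) \<Rightarrow> (nat \<Rightarrow> real) \<Rightarrow> real \<Rightarrow> real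
    \<Rightarrow> (real \<Rightarrow> complex) \<Rightarrow> nat \<Rightarrow> int \<Rightarrow> complex" where
  "phi q N t a al b c D l n =
     of_real (tau b c n) * (cint D (\<lambda>v.
        exp (- v * of_real t) / v powi (n + int N) * (1 / (v - of_real (a (l+1))))
        * (\<Prod>j=1..l. (v - of_real (al j)) / (v - of_real (a j)))
        * (\<Prod>k=1..N. qpoch (of_real q * of_real (al k) / v) q / qpoch (of_real q * v / of_real (a k)) q))
      / (2 * pi * \<i>))"

definition psi :: "real \<Rightarrow> nat \<Rightarrow> real \<Rightarrow> (nat \<Rightarrow> real) \<Rightarrow> (nat \<Rightarrow> real) \<Rightarrow> real \<Rightarrow> real
    \<Rightarrow> (real \<Rightarrow> complex) \<Rightarrow> nat \<Rightarrow> int \<Rightarrow> complex" where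
  "psi q N t a al b c C l n =
     of_real ((a (l+1) - al (l+1)) / tau b c n) * (cint C (\<lambda>z.
        (1 / z) * exp (z * of_real t) * z powi (n + int N) / (z - of_real (al (l+1)))
        * (\<Prod>j=1..l. (z - of_real (a j)) / (z - of_real (al j)))
        * (\<Prod>k=1..N. qpoch (of_real q * z / of_real (a k)) q / qpoch (of_real q * of_real (al k) / z) q))
      / (2 * pi * \<i>))"

end

theory Submission
  imports Defs "HOL-Complex_Analysis.Complex_Analysis"
begin

text \<open>
  Let E and H be the integrands of phi_l(0) and psi_m(0), so that
  phi_l(n) = tau(n) (2 pi i)^-1 \<integral>_D E(v) v^-n dv and
  psi_m(n) = (a_{m+1} - al_{m+1}) tau(n)^-1 (2 pi i)^-1 \<integral>_C H(z) z^n dz.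
  By the residue theorem D may be replaced by small circles around the poles a_k, and C by a
  circle of radius r_in (for n \<ge> 0) or r_out (for n < 0), where max al < r_in < |v| < r_out
  on all the small circles.  Summing over n, the geometric series in z/v and in v/z produce the
  Cauchy kernel, and Cauchy's formula in the annulus r_in < |z| < r_out turns
  \<Sum>_n phi_l(n) psi_m(n) into (a_{m+1} - al_{m+1}) (2 pi i)^-1 times the sum of the
  small-circle integrals of E(v) v H(v).  In this product the exponentials, the powers of v and
  the q-Pochhammer symbols cancel, leaving a rational function R(v).  For l = m, R is a multiple
  of 1/(v - a_{m+1}) - 1/(v - al_{m+1}), which gives 1; for l < m, R has no poles at the a_k;
  for l > m, R has no poles at the al_j and decays like |v|^-2, so its residues at the a_k add
  up to zero.
\<close>

lemma cint_eq_contour_integral: "cint g f = contour_integral g f"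
  by (simp add: cint_def contour_integral_def integral_def has_contour_integral_def
      contour_integrable_on_def integrable_on_def)

lemma wn_eq_winding_number:
  assumes "valid_path g" "z \<notin> path_image g"
  shows "wn g z = winding_number g z"
  using winding_number_valid_path[OF assms] by (simp add: wn_def cint_eq_contour_integral)

subsection \<open>The q-Pochhammer symbol\<close>

lemma weierstrass_product_qpoch:
  fixes q :: real
  assumes "0 < q" "q < 1"
  shows "weierstrass_product (\<lambda>n. 1 / of_real q ^ n) (\<lambda>_. 0)"
proof
  fix n show "1 / complex_of_real q ^ n \<noteq> 0" using assms by simp
next
  have "LIM n sequentially. (1 / complex_of_real q) ^ n :> at_infinity"
    using assms by (intro filterlim_realpow_sequentially_gt1) (auto simp: norm_divide)
  then show "filterlim (\<lambda>n. 1 / complex_of_real q ^ n) at_infinity at_top"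
    by (simp add: power_one_over)
next
  fix r :: real
  have "summable (\<lambda>n. r * q ^ n)" using assms by (intro summable_mult summable_geometric) auto
  then show "summable (\<lambda>n. (r / norm (1 / complex_of_real q ^ n)) ^ Suc 0)"
    using assms by (simp add: norm_divide norm_power)
qed

lemma qpoch_eq_weierstrass_product:
  fixes q :: real
  assumes "0 < q" "q < 1"
  shows "qpoch z q = weierstrass_product.f (\<lambda>n. 1 / of_real q ^ n) (\<lambda>_. 0) z"
  unfolding weierstrass_product.f_def[OF weierstrass_product_qpoch[OF assms]] qpoch_def
  by (simp add: weierstrass_factor_def)

lemma holomorphic_on_qpoch [holomorphic_intros]:
  fixes q :: real
  assumes "0 < q" "q < 1" and "f holomorphic_on A"
  shows "(\<lambda>z. qpoch (f z) q) holomorphic_on A"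
proof -
  have "(\<lambda>z. qpoch z q) holomorphic_on UNIV"
    using weierstrass_product.holomorphic[OF weierstrass_product_qpoch[OF assms(1,2)]]
      qpoch_eq_weierstrass_product[OF assms(1,2)] by presburger
  then show ?thesis
    using holomorphic_on_compose_gen[OF assms(3), of "\<lambda>z. qpoch z q" UNIV] by (auto simp: o_def)
qed

lemma qpoch_eq_0_iff:
  fixes q :: real
  assumes "0 < q" "q < 1"
  shows "qpoch z q = 0 \<longleftrightarrow> (\<exists>n. z = 1 / of_real q ^ n)"
  using weierstrass_product.zero[OF weierstrass_product_qpoch[OF assms]]
    qpoch_eq_weierstrass_product[OF assms] by auto

subsection \<open>Homologous cycles\<close>

lemma homologous_cycle_join:
  fixes S :: "complex set"
  assumes S: "open S" "connected S"
    and g1: "valid_path g1" "pathfinish g1 = pathstart g1" "path_image g1 \<subseteq> S"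
    and g2: "valid_path g2" "pathfinish g2 = pathstart g2" "path_image g2 \<subseteq> S"
  obtains g where "valid_path g" "pathfinish g = pathstart g" "path_image g \<subseteq> S"
    "\<And>w. w \<notin> S \<Longrightarrow> winding_number g w = winding_number g1 w - winding_number g2 w"
    "\<And>f. f holomorphic_on S \<Longrightarrow> contour_integral g f = contour_integral g1 f - contour_integral g2 f"
proof -
  have "pathstart g1 \<in> S" "pathstart g2 \<in> S"
    using g1 g2 pathstart_in_path_image by blast+
  then obtain p where p: "polynomial_function p" "path_image p \<subseteq> S"
    "pathstart p = pathstart g1" "pathfinish p = pathstart g2"
    using connected_open_polynomial_connected[OF S] by metis
  have vp: "valid_path p" using p(1) valid_path_polynomial_function by blast
  define g where "g = g1 +++ (p +++ (reversepath g2 +++ reversepath p))"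
  have "valid_path g" unfolding g_def
    using g1 g2 vp p by (intro valid_path_join) (auto simp: valid_path_reversepath)
  moreover have "pathfinish g = pathstart g" unfolding g_def using p by simp
  moreover have "path_image g \<subseteq> S" unfolding g_def using g1 g2 p
    by (intro subset_path_image_join) (auto simp: path_image_reversepath)
  moreover have "winding_number g w = winding_number g1 w - winding_number g2 w" if w: "w \<notin> S" for w
  proof -
    have nw: "w \<notin> path_image g1" "w \<notin> path_image g2" "w \<notin> path_image p"
      using w g1 g2 p by auto
    have pp: "path g1" "path g2" "path p" using g1 g2 vp valid_path_imp_path by auto
    have "winding_number g w = winding_number g1 w + (winding_number p w +
        (winding_number (reversepath g2) w + winding_number (reversepath p) w))"
      unfolding g_def using nw pp p g1 g2
      by (simp add: winding_number_join not_in_path_image_join path_image_reversepath)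
    then show ?thesis using nw pp by (simp add: winding_number_reversepath)
  qed
  moreover have "contour_integral g f = contour_integral g1 f - contour_integral g2 f"
    if f: "f holomorphic_on S" for f
  proof -
    have ci: "f contour_integrable_on h" if "valid_path h" "path_image h \<subseteq> S" for h
      using contour_integrable_holomorphic_simple[OF f S(1) that] .
    have "f contour_integrable_on g1" "f contour_integrable_on g2" "f contour_integrable_on p"
      "f contour_integrable_on reversepath g2" "f contour_integrable_on reversepath p"
      using ci g1 g2 vp p by (auto simp: valid_path_reversepath path_image_reversepath)
    then have "contour_integral g f = contour_integral g1 f + (contour_integral p f +
        (contour_integral (reversepath g2) f + contour_integral (reversepath p) f))"
      unfolding g_def using g1 g2 vp p
      by (simp add: contour_integrable_joinI valid_path_join valid_path_reversepath)
    then show ?thesis using g2 vp by (simp add: contour_integral_reversepath)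
  qed
  ultimately show ?thesis using that by blast
qed

lemma Cauchy_theorem_homologous:
  fixes S :: "complex set"
  assumes S: "open S" "connected S" and f: "f holomorphic_on S"
    and g1: "valid_path g1" "pathfinish g1 = pathstart g1" "path_image g1 \<subseteq> S"
    and g2: "valid_path g2" "pathfinish g2 = pathstart g2" "path_image g2 \<subseteq> S"
    and w: "\<And>w. w \<notin> S \<Longrightarrow> winding_number g1 w = winding_number g2 w"
  shows "contour_integral g1 f = contour_integral g2 f"
proof -
  obtain g where g: "valid_path g" "pathfinish g = pathstart g" "path_image g \<subseteq> S"
    "\<And>w. w \<notin> S \<Longrightarrow> winding_number g w = winding_number g1 w - winding_number g2 w"
    "\<And>f. f holomorphic_on S \<Longrightarrow> contour_integral g f = contour_integral g1 f - contour_integral g2 f"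
    using homologous_cycle_join[OF S g1 g2] by blast
  have "(f has_contour_integral 0) g"
    using g w by (intro Cauchy_theorem_global[OF S(1) f]) auto
  then show ?thesis using g(5)[OF f] contour_integral_unique by fastforce
qed

lemma Cauchy_integral_formula_homologous:
  fixes S :: "complex set"
  assumes S: "open S" "connected S" and f: "f holomorphic_on S" and z: "z \<in> S"
    and g1: "valid_path g1" "pathfinish g1 = pathstart g1" "path_image g1 \<subseteq> S - {z}"
    and g2: "valid_path g2" "pathfinish g2 = pathstart g2" "path_image g2 \<subseteq> S - {z}"
    and w: "\<And>w. w \<notin> S \<Longrightarrow> winding_number g1 w = winding_number g2 w"
  shows "contour_integral g1 (\<lambda>w. f w / (w - z)) - contour_integral g2 (\<lambda>w. f w / (w - z))
     = 2 * pi * \<i> * (winding_number g1 z - winding_number g2 z) * f z"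
proof -
  have S': "open (S - {z})" "connected (S - {z})"
    using S by (auto intro: connected_open_delete)
  have hol: "(\<lambda>w. f w / (w - z)) holomorphic_on S - {z}"
    by (intro holomorphic_intros holomorphic_on_subset[OF f]) auto
  obtain g where g: "valid_path g" "pathfinish g = pathstart g" "path_image g \<subseteq> S - {z}"
    "\<And>w. w \<notin> S - {z} \<Longrightarrow> winding_number g w = winding_number g1 w - winding_number g2 w"
    "\<And>f. f holomorphic_on S - {z} \<Longrightarrow>
       contour_integral g f = contour_integral g1 f - contour_integral g2 f"
    using homologous_cycle_join[OF S' g1 g2] by blast
  have "((\<lambda>w. f w / (w-z)) has_contour_integral (2*pi * \<i> * winding_number g z * f z)) g"
    using g w by (intro Cauchy_integral_formula_global[OF S(1) f z]) auto
  then show ?thesis using g(4)[of z] g(5)[OF hol] contour_integral_unique by fastforce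
qed

subsection \<open>Integrals over circles\<close>

lemma continuous_on_sphere_bounded:
  fixes f :: "complex \<Rightarrow> complex"
  assumes "continuous_on (sphere z r) f"
  obtains M where "M > 0" "\<And>w. w \<in> sphere z r \<Longrightarrow> norm (f w) \<le> M"
proof -
  have "bounded (f ` sphere z r)"
    using assms compact_sphere compact_continuous_image compact_imp_bounded by blast
  then show ?thesis using that by (auto simp: bounded_pos)
qed

lemma norm_contour_integral_circlepath_le:
  assumes "0 < r" "continuous_on (sphere z r) f" "\<And>w. w \<in> sphere z r \<Longrightarrow> norm (f w) \<le> B"
  shows "norm (contour_integral (circlepath z r) f) \<le> B * (2 * pi * r)"
proof -
  have "f contour_integrable_on circlepath z r"
    using assms by (intro contour_integrable_continuous_circlepath) auto
  then have "(f has_contour_integral contour_integral (circlepath z r) f) (circlepath z r)"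
    by (rule has_contour_integral_integral)
  moreover have "z + of_real r \<in> sphere z r" using assms(1) by (simp add: dist_norm)
  then have "0 \<le> B" using assms(3) norm_ge_zero order_trans by blast
  ultimately show ?thesis using assms
    by (intro has_contour_integral_bound_circlepath) (auto simp: dist_norm norm_minus_commute)
qed

lemma contour_integral_circlepath_inverse:
  assumes "0 < r" "w \<notin> sphere z r"
  shows "contour_integral (circlepath z r) (\<lambda>v. 1 / (v - w)) = (if dist z w < r then 2 * pi * \<i> else 0)"
proof -
  have "contour_integral (circlepath z r) (\<lambda>v. 1 / (v - w)) = 2 * pi * \<i> * winding_number (circlepath z r) w"
    using winding_number_valid_path[of "circlepath z r" w] assms by simp
  moreover have "winding_number (circlepath z r) w = (if dist z w < r then 1 else 0)"
    using assms winding_number_circlepath[of w z r]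
      winding_number_zero_outside[of "circlepath z r" "cball z r" w]
    by (auto simp: dist_norm norm_minus_commute)
  ultimately show ?thesis by simp
qed

lemma contour_integral_circlepath_sums:
  fixes f :: "nat \<Rightarrow> complex \<Rightarrow> complex"
  assumes r: "0 < r" and cont: "\<And>k. continuous_on (sphere z r) (f k)"
    and bnd: "\<And>k w. w \<in> sphere z r \<Longrightarrow> norm (f k w) \<le> M k" and M: "summable M"
    and F: "\<And>w. w \<in> sphere z r \<Longrightarrow> (\<lambda>k. f k w) sums F w"
  shows "(\<lambda>k. contour_integral (circlepath z r) (f k)) sums contour_integral (circlepath z r) F"
    and "F contour_integrable_on circlepath z r"
    and "summable (\<lambda>k. norm (contour_integral (circlepath z r) (f k)))"
proof -
  have "uniform_limit (sphere z r) (\<lambda>n x. \<Sum>i<n. f i x) (\<lambda>x. \<Sum>i. f i x) sequentially"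
    by (rule Weierstrass_m_test[OF bnd M])
  then have ul: "uniform_limit (sphere z r) (\<lambda>n x. \<Sum>i<n. f i x) F sequentially"
    by (rule uniform_limit_cong[THEN iffD1, rotated 2]) (use F in \<open>auto simp: sums_iff\<close>)
  have ci: "f k contour_integrable_on circlepath z r" for k
    using cont r by (intro contour_integrable_continuous_circlepath) auto
  have "\<forall>\<^sub>F n in sequentially. (\<lambda>x. \<Sum>i<n. f i x) contour_integrable_on (circlepath z r)"
    using ci by (intro always_eventually allI contour_integrable_sum) auto
  note lim = contour_integral_uniform_limit_circlepath[OF this ul _ r]
  show "F contour_integrable_on circlepath z r" using lim by auto
  have "(\<lambda>n. contour_integral (circlepath z r) (\<lambda>x. \<Sum>i<n. f i x)) =
      (\<lambda>n. \<Sum>i<n. contour_integral (circlepath z r) (f i))"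
    using ci by (intro ext contour_integral_sum) auto
  with lim show "(\<lambda>k. contour_integral (circlepath z r) (f k)) sums contour_integral (circlepath z r) F"
    unfolding sums_def by auto
  have "norm (contour_integral (circlepath z r) (f k)) \<le> M k * (2 * pi * r)" for k
    by (rule norm_contour_integral_circlepath_le[OF r cont bnd])
  then show "summable (\<lambda>k. norm (contour_integral (circlepath z r) (f k)))"
    by (intro summable_comparison_test'[OF summable_mult2[OF M]]) auto
qed

lemma contour_integral_circlepath_geometric_sums:
  fixes h g :: "complex \<Rightarrow> complex"
  assumes r: "0 < r" and cont: "continuous_on (sphere z r) h" "continuous_on (sphere z r) g"
    and g: "\<And>w. w \<in> sphere z r \<Longrightarrow> norm (g w) \<le> \<theta>" "\<theta> < 1"
  shows "(\<lambda>k. contour_integral (circlepath z r) (\<lambda>w. h w * g w ^ k)) sums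
           contour_integral (circlepath z r) (\<lambda>w. h w / (1 - g w))"
proof -
  obtain M where M: "M > 0" "\<And>w. w \<in> sphere z r \<Longrightarrow> norm (h w) \<le> M"
    using continuous_on_sphere_bounded[OF cont(1)] by blast
  have "z + of_real r \<in> sphere z r" using r by (simp add: dist_norm)
  then have "0 \<le> \<theta>" using g(1) norm_ge_zero order_trans by blast
  show ?thesis
  proof (rule contour_integral_circlepath_sums(1)[where M = "\<lambda>k. M * \<theta> ^ k"])
    show "norm (h w * g w ^ k) \<le> M * \<theta> ^ k" if "w \<in> sphere z r" for k w
      unfolding norm_mult norm_power
      using M g that \<open>0 \<le> \<theta>\<close> by (intro mult_mono power_mono) auto
    show "(\<lambda>k. h w * g w ^ k) sums (h w / (1 - g w))" if "w \<in> sphere z r" for w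
    proof -
      have "norm (g w) < 1" using g that by (meson le_less_trans)
      then show ?thesis using sums_mult[OF geometric_sums, of "g w" "h w"] by (simp add: divide_inverse)
    qed
    show "continuous_on (sphere z r) (\<lambda>w. h w * g w ^ k)" for k
      by (intro continuous_intros cont)
    show "summable (\<lambda>k. M * \<theta> ^ k)"
      using \<open>0 \<le> \<theta>\<close> g(2) by (intro summable_mult summable_geometric) auto
  qed (rule r)
qed

lemma contour_integral_eq_sum_circlepaths:
  fixes S P :: "complex set"
  assumes S: "open S" "connected S" and P: "finite P" "P \<subseteq> S"
    and f: "f holomorphic_on S - P"
    and g: "valid_path g" "pathfinish g = pathstart g" "path_image g \<subseteq> S - P"
    and wn_out: "\<And>w. w \<notin> S \<Longrightarrow> winding_number g w = 0"
    and wn_P: "\<And>p. p \<in> P \<Longrightarrow> winding_number g p = 1"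
    and e: "0 < e" "\<And>p. p \<in> P \<Longrightarrow> cball p e \<subseteq> S"
      "\<And>p p'. p \<in> P \<Longrightarrow> p' \<in> P \<Longrightarrow> p' \<in> cball p e \<Longrightarrow> p' = p"
  shows "contour_integral g f = (\<Sum>p\<in>P. contour_integral (circlepath p e) f)"
proof -
  have "contour_integral g f = 2 * pi * \<i> * (\<Sum>p\<in>P. winding_number g p * residue f p)"
    using wn_out by (intro Residue_theorem[OF S P(1) f g]) auto
  also have "\<dots> = (\<Sum>p\<in>P. contour_integral (circlepath p e) f)"
    unfolding sum_distrib_left
  proof (intro sum.cong refl)
    fix p assume p: "p \<in> P"
    have "open (S - (P - {p}))" using S P by (auto intro: open_Diff finite_imp_closed)
    moreover have "f holomorphic_on (S - (P - {p})) - {p}"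
      using f by (rule holomorphic_on_subset) auto
    moreover have "cball p e \<subseteq> S - (P - {p})" using e p by blast
    ultimately have "(f has_contour_integral 2 * pi * \<i> * residue f p) (circlepath p e)"
      using e(1) p P by (intro base_residue) auto
    then show "2 * pi * \<i> * (winding_number g p * residue f p) = contour_integral (circlepath p e) f"
      using wn_P[OF p] contour_integral_unique by auto
  qed
  finally show ?thesis .
qed

lemma eq_0_if_norm_le_inverse:
  fixes y :: "'a::real_normed_vector"
  assumes "\<And>r. r \<ge> r_min \<Longrightarrow> norm y \<le> K / r"
  shows "y = 0"
proof (rule ccontr)
  assume "y \<noteq> 0"
  define r where "r = max r_min 1 + \<bar>K\<bar> / norm y"
  have "r \<ge> r_min" "r > 0" unfolding r_def by (auto intro: add_pos_nonneg add_increasing2)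
  then have "norm y * r \<le> K" using assms[of r] by (simp add: le_divide_eq mult.commute)
  moreover have "norm y * r = norm y * max r_min 1 + \<bar>K\<bar>"
    using \<open>y \<noteq> 0\<close> unfolding r_def by (simp add: distrib_left)
  moreover have "norm y * max r_min 1 > 0" using \<open>y \<noteq> 0\<close> by simp
  ultimately show False by (smt (verit) abs_ge_self)
qed

lemma sum_contour_integral_circlepaths_eq_0:
  fixes P :: "complex set"
  assumes P: "finite P" "P \<subseteq> ball 0 r_min" and f: "f holomorphic_on - P"
    and e: "0 < e" "\<And>p p'. p \<in> P \<Longrightarrow> p' \<in> P \<Longrightarrow> p' \<in> cball p e \<Longrightarrow> p' = p"
    and decay: "\<And>v. r_min \<le> norm v \<Longrightarrow> norm (f v) \<le> K / norm v ^ 2"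
  shows "(\<Sum>p\<in>P. contour_integral (circlepath p e) f) = 0"
proof (rule eq_0_if_norm_le_inverse)
  fix r assume r: "max r_min 1 \<le> r"
  have img: "path_image (circlepath 0 r) \<subseteq> - P" using P(2) r by auto
  have "contour_integral (circlepath 0 r) f = (\<Sum>p\<in>P. contour_integral (circlepath p e) f)"
  proof (rule contour_integral_eq_sum_circlepaths[where S = UNIV])
    show "f holomorphic_on UNIV - P" using f by (simp add: Compl_eq_Diff_UNIV)
    show "winding_number (circlepath 0 r) p = 1" if "p \<in> P" for p
      using that P(2) r by (intro winding_number_circlepath) auto
  qed (use P img e in auto)
  moreover have "norm (contour_integral (circlepath 0 r) f) \<le> K / r ^ 2 * (2 * pi * r)"
  proof (rule norm_contour_integral_circlepath_le)
    show "continuous_on (sphere 0 r) f"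
      using img r by (intro holomorphic_on_imp_continuous_on holomorphic_on_subset[OF f]) auto
  qed (use r decay in auto)
  moreover have "K / r ^ 2 * (2 * pi * r) = 2 * pi * K / r"
    using r by (simp add: power2_eq_square field_simps)
  ultimately show "norm (\<Sum>p\<in>P. contour_integral (circlepath p e) f) \<le> 2 * pi * K / r" by simp
qed

subsection \<open>Closed discrete sets\<close>

lemma closed_if_finite_bounded_parts:
  fixes X :: "complex set"
  assumes "\<And>M. finite {x \<in> X. norm x \<le> M}"
  shows "closed X"
  unfolding closed_limpt
proof (intro allI impI)
  fix x assume lim: "x islimpt X"
  have "x islimpt {y \<in> X. norm y \<le> norm x + 1}"
    unfolding islimpt_approachable
  proof (intro allI impI)
    fix e :: real assume "e > 0"
    then obtain y where y: "y \<in> X" "y \<noteq> x" "dist y x < min e 1"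
      using lim unfolding islimpt_approachable by (meson less_numeral_extra(1) min_less_iff_conj)
    have "norm y \<le> norm x + 1" using y(3) norm_triangle_ineq2[of y x] by (simp add: dist_norm)
    then show "\<exists>y'\<in>{y \<in> X. norm y \<le> norm x + 1}. y' \<noteq> x \<and> dist y' x < e" using y by auto
  qed
  then show "x \<in> X" using islimpt_finite[OF assms] by blast
qed

lemma closed_if_finite_parts_away_from_0:
  fixes X :: "complex set"
  assumes "0 \<in> X" "\<And>d. d > 0 \<Longrightarrow> finite {x \<in> X. d \<le> norm x}"
  shows "closed X"
  unfolding closed_limpt
proof (intro allI impI)
  fix x assume lim: "x islimpt X"
  show "x \<in> X"
  proof (cases "x = 0")
    case False
    have "x islimpt {y \<in> X. norm x / 2 \<le> norm y}"
      unfolding islimpt_approachable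
    proof (intro allI impI)
      fix e :: real assume "e > 0"
      then have "min e (norm x / 2) > 0" using False by auto
      then obtain y where y: "y \<in> X" "y \<noteq> x" "dist y x < min e (norm x / 2)"
        using lim unfolding islimpt_approachable by blast
      have "norm x / 2 \<le> norm y"
        using y(3) norm_triangle_ineq2[of x y] by (simp add: dist_norm norm_minus_commute)
      then show "\<exists>y'\<in>{y \<in> X. norm x / 2 \<le> norm y}. y' \<noteq> x \<and> dist y' x < e" using y by auto
    qed
    moreover have "finite {y \<in> X. norm x / 2 \<le> norm y}" using False by (intro assms(2)) auto
    ultimately show ?thesis using islimpt_finite by blast
  qed (use assms in simp)
qed

lemma finite_separated_from_closed:
  fixes P T :: "'a::heine_borel set"
  assumes "finite P" "closed T" "P \<inter> T = {}"
  obtains e where "e > 0" "\<And>p x. p \<in> P \<Longrightarrow> x \<in> T \<union> P \<Longrightarrow> x \<noteq> p \<Longrightarrow> e < dist p x"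
proof -
  have "\<exists>d>0. \<forall>x\<in>T \<union> (P - {p}). d \<le> dist p x" if "p \<in> P" for p
  proof (rule separate_point_closed)
    show "closed (T \<union> (P - {p}))" by (metis assms(1,2) closed_Un finite_Diff finite_imp_closed)
  qed (use assms that in auto)
  then obtain d where d: "\<And>p. p \<in> P \<Longrightarrow> d p > 0 \<and> (\<forall>x\<in>T \<union> (P - {p}). d p \<le> dist p x)"
    by metis
  define e where "e = Min (insert 1 (d ` P)) / 2"
  have "Min (insert 1 (d ` P)) > 0" using assms(1) d by (subst Min_gr_iff) auto
  then have "e > 0" unfolding e_def by simp
  moreover have "e < dist p x" if "p \<in> P" "x \<in> T \<union> P" "x \<noteq> p" for p x
  proof -
    have "e < Min (insert 1 (d ` P))" using \<open>e > 0\<close> unfolding e_def by linarith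
    also have "\<dots> \<le> d p" using assms(1) that by (intro Min_le) auto
    also have "\<dots> \<le> dist p x" using d that by auto
    finally show ?thesis .
  qed
  ultimately show ?thesis using that by blast
qed

lemma has_sum_int_split:
  fixes u :: "int \<Rightarrow> complex"
  assumes "summable (\<lambda>k. norm (u (int k)))" "(\<lambda>k. u (int k)) sums X"
    "summable (\<lambda>k. norm (u (- int (Suc k))))" "(\<lambda>k. u (- int (Suc k))) sums Y"
  shows "(u has_sum (X + Y)) UNIV"
proof -
  have "((\<lambda>k. u (int k)) has_sum X) UNIV" "((\<lambda>k. u (- int (Suc k))) has_sum Y) UNIV"
    using assms by (auto intro: norm_summable_imp_has_sum)
  moreover have "inj int" "inj (\<lambda>k. - int (Suc k))" by (auto simp: inj_on_def)
  ultimately have X: "(u has_sum X) (range int)" and Y: "(u has_sum Y) (range (\<lambda>k. - int (Suc k)))"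
    by (simp_all add: has_sum_reindex o_def)
  have UNIV: "range int \<union> range (\<lambda>k. - int (Suc k)) = UNIV"
  proof -
    have "n \<in> range int \<union> range (\<lambda>k. - int (Suc k))" for n :: int
      using range_eqI[of n int "nat n"] range_eqI[of n "\<lambda>k. - int (Suc k)" "nat (- n - 1)"]
      by (cases "n \<ge> 0") auto
    then show ?thesis by blast
  qed
  have "range int \<inter> range (\<lambda>k. - int (Suc k)) = {}" by auto
  then have "(u has_sum (X + Y)) (range int \<union> range (\<lambda>k. - int (Suc k)))"
    by (rule has_sum_Un_disjoint[OF X Y])
  with UNIV show ?thesis by simp
qed

lemma has_sum_sum:
  fixes f :: "'a \<Rightarrow> 'b \<Rightarrow> complex"
  assumes "finite A" "\<And>p. p \<in> A \<Longrightarrow> (f p has_sum s p) S"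
  shows "((\<lambda>n. \<Sum>p\<in>A. f p n) has_sum (\<Sum>p\<in>A. s p)) S"
  using assms by (induction A rule: finite_induct) (auto intro: has_sum_add)

lemma prod_divide_mult_prod_divide:
  fixes x y :: "nat \<Rightarrow> 'a::field"
  assumes "k \<le> n" "\<And>j. j \<in> {1..n} \<Longrightarrow> x j \<noteq> 0" "\<And>j. j \<in> {1..n} \<Longrightarrow> y j \<noteq> 0"
  shows "(\<Prod>j=1..k. x j / y j) * (\<Prod>j=1..n. y j / x j) = (\<Prod>j=Suc k..n. y j / x j)"
proof -
  have "{1..n} = {1..k} \<union> {Suc k..n}" using assms(1) by auto
  then have "(\<Prod>j=1..n. y j / x j) = (\<Prod>j=1..k. y j / x j) * (\<Prod>j=Suc k..n. y j / x j)"
    by (simp add: prod.union_disjoint)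
  moreover have "(\<Prod>j=1..k. x j / y j) * (\<Prod>j=1..k. y j / x j) = 1"
    using assms by (simp add: prod.distrib[symmetric])
  ultimately show ?thesis by (simp add: mult.assoc[symmetric])
qed

lemma one_divide_mult_divide_cancel:
  fixes w y X :: "'a::field"
  assumes "w \<noteq> 0"
  shows "1 / w * (w / y * X) = 1 / y * X"
  using assms by (simp add: field_simps)


locale biorthogonality =
  fixes q t :: real and N :: nat and a al :: "nat \<Rightarrow> real"
    and D C :: "real \<Rightarrow> complex" and l m :: nat
  assumes q: "0 < q" "q < 1"
    and aal: "\<And>i j. i \<in> {1..N} \<Longrightarrow> j \<in> {1..N} \<Longrightarrow> 0 \<le> al i \<and> al i < a j \<and> a j \<le> 1"
    and D: "valid_path D" "pathfinish D = pathstart D"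
      "\<And>i. i \<in> {1..N} \<Longrightarrow> of_real (a i) \<notin> path_image D \<and> wn D (of_real (a i)) = 1"
      "0 \<notin> path_image D" "wn D 0 = 0"
      "\<And>k j. k \<in> {1..N} \<Longrightarrow> j \<ge> 1 \<Longrightarrow>
         of_real (a k / q ^ j) \<notin> path_image D \<and> wn D (of_real (a k / q ^ j)) = 0"
    and C: "valid_path C" "pathfinish C = pathstart C"
      "0 \<notin> path_image C" "wn C 0 = 1"
      "\<And>i j. i \<in> {1..N} \<Longrightarrow>
         of_real (al i * q ^ j) \<notin> path_image C \<and> wn C (of_real (al i * q ^ j)) = 1"
    and lm: "l < N" "m < N"
begin

definition amin :: real where "amin = Min (a ` {1..N})"
definition almax :: real where "almax = Max (al ` {1..N})"
definition gap :: real where "gap = amin - almax"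

lemma amin_le: "k \<in> {1..N} \<Longrightarrow> amin \<le> a k"
  unfolding amin_def by (intro Min_le) auto

lemma almax_ge: "k \<in> {1..N} \<Longrightarrow> al k \<le> almax"
  unfolding almax_def by (intro Max_ge) auto

lemma almax_amin: "0 \<le> almax" "almax < amin" "amin \<le> 1"
proof -
  have "{1..N} \<noteq> {}" using lm by auto
  then have "almax \<in> al ` {1..N}" "amin \<in> a ` {1..N}"
    unfolding almax_def amin_def by (intro Max_in Min_in; simp)+
  then obtain i j where "i \<in> {1..N}" "almax = al i" "j \<in> {1..N}" "amin = a j" by blast
  then show "0 \<le> almax" "almax < amin" "amin \<le> 1" using aal by auto
qed

lemma gap_pos: "0 < gap"
  using almax_amin unfolding gap_def by simp

lemma a_bounds: "k \<in> {1..N} \<Longrightarrow> amin \<le> a k \<and> a k \<le> 1"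
  using amin_le aal by blast

lemma a_pos: "k \<in> {1..N} \<Longrightarrow> 0 < a k"
  using a_bounds almax_amin by force

lemma al_bounds: "k \<in> {1..N} \<Longrightarrow> 0 \<le> al k \<and> al k \<le> almax"
  using almax_ge aal by blast

text \<open>The poles a_k of the phi-integrand inside D, its remaining singularities (0 and the zeros
  a_k q^{-j} of the denominator q-Pochhammer symbols), and the singularities of the psi-integrand
  (0 and the points al_k q^j).\<close>

definition a_poles :: "complex set" where
  "a_poles = (\<lambda>k. complex_of_real (a k)) ` {1..N}"

definition phi_sing :: "complex set" where
  "phi_sing = insert 0 ((\<lambda>(k,j). complex_of_real (a k / q ^ j)) ` ({1..N} \<times> {1..}))"

definition psi_sing :: "complex set" where
  "psi_sing = insert 0 ((\<lambda>(k,j). complex_of_real (al k * q ^ j)) ` ({1..N} \<times> UNIV))"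

lemma finite_a_poles: "finite a_poles"
  unfolding a_poles_def by simp

lemma a_poles_norm: "p \<in> a_poles \<Longrightarrow> amin \<le> norm p" "p \<in> a_poles \<Longrightarrow> norm p \<le> 1"
  unfolding a_poles_def using a_bounds almax_amin by fastforce+

lemma psi_sing_norm: "x \<in> psi_sing \<Longrightarrow> norm x \<le> almax"
proof (cases "x = 0")
  case False
  assume "x \<in> psi_sing"
  then obtain k j where kj: "k \<in> {1..N}" "x = of_real (al k * q ^ j)"
    using False unfolding psi_sing_def by auto
  have "norm x = al k * q ^ j" using kj al_bounds[OF kj(1)] q by (simp add: norm_mult norm_power)
  also have "\<dots> \<le> al k" using al_bounds[OF kj(1)] q by (intro mult_right_le_one_le power_le_one) auto
  finally show ?thesis using al_bounds[OF kj(1)] by simp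
qed (use almax_amin in simp)

lemma sphere_disjoint_psi_sing: "almax < r \<Longrightarrow> sphere 0 r \<inter> psi_sing = {}"
  using psi_sing_norm by fastforce

lemma closed_phi_sing: "closed phi_sing"
proof (rule closed_if_finite_bounded_parts)
  fix M :: real
  obtain J where J: "max M 0 / amin < (1/q) ^ J" using real_arch_pow[of "1/q"] q by auto
  have "{x \<in> phi_sing. norm x \<le> M} \<subseteq>
      insert 0 ((\<lambda>(k,j). complex_of_real (a k / q ^ j)) ` ({1..N} \<times> {1..J}))"
  proof
    fix x assume x: "x \<in> {x \<in> phi_sing. norm x \<le> M}"
    show "x \<in> insert 0 ((\<lambda>(k,j). complex_of_real (a k / q ^ j)) ` ({1..N} \<times> {1..J}))"
    proof (cases "x = 0")
      case False
      then obtain k j where kj: "k \<in> {1..N}" "j \<ge> 1" "x = complex_of_real (a k / q ^ j)"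
        using x unfolding phi_sing_def by auto
      have "j \<le> J"
      proof (rule ccontr)
        assume "\<not> j \<le> J"
        then have "(1/q) ^ J \<le> (1/q) ^ j" using q by (intro power_increasing) auto
        then have "max M 0 / amin < (1/q) ^ j" using J by linarith
        then have "max M 0 < amin * (1/q) ^ j" using almax_amin by (simp add: field_simps)
        also have "\<dots> \<le> a k * (1/q) ^ j" using amin_le[OF kj(1)] q by (intro mult_right_mono) auto
        also have "\<dots> = norm x"
          using kj a_bounds[OF kj(1)] almax_amin q by (simp add: norm_divide norm_power power_one_over)
        finally show False using x by auto
      qed
      then show ?thesis using kj by auto
    qed auto
  qed
  then show "finite {x \<in> phi_sing. norm x \<le> M}" by (rule finite_subset) auto
qed

lemma closed_psi_sing: "closed psi_sing"
proof (rule closed_if_finite_parts_away_from_0)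
  show "0 \<in> psi_sing" unfolding psi_sing_def by auto
  fix d :: real assume d: "d > 0"
  obtain J where J: "q ^ J < d" using real_arch_pow_inv[OF d q(2)] by auto
  have "{x \<in> psi_sing. d \<le> norm x} \<subseteq>
      insert 0 ((\<lambda>(k,j). complex_of_real (al k * q ^ j)) ` ({1..N} \<times> {..<J}))"
  proof
    fix x assume x: "x \<in> {x \<in> psi_sing. d \<le> norm x}"
    show "x \<in> insert 0 ((\<lambda>(k,j). complex_of_real (al k * q ^ j)) ` ({1..N} \<times> {..<J}))"
    proof (cases "x = 0")
      case False
      then obtain k j where kj: "k \<in> {1..N}" "x = complex_of_real (al k * q ^ j)"
        using x unfolding psi_sing_def by auto
      have "j < J"
      proof (rule ccontr)
        assume "\<not> j < J"
        then have "q ^ j \<le> q ^ J" using q by (intro power_decreasing) auto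
        have "norm x = al k * q ^ j" using kj al_bounds[OF kj(1)] q by (simp add: norm_mult norm_power)
        also have "\<dots> \<le> 1 * q ^ j" using aal[OF kj(1) kj(1)] q by (intro mult_right_mono) auto
        also have "\<dots> < d" using J \<open>q ^ j \<le> q ^ J\<close> by simp
        finally show False using x by auto
      qed
      then show ?thesis using kj by auto
    qed auto
  qed
  then show "finite {x \<in> psi_sing. d \<le> norm x}" by (rule finite_subset) auto
qed

lemma open_connected_complements:
  "open (- phi_sing)" "connected (- phi_sing)" "open (- psi_sing)" "connected (- psi_sing)"
proof -
  have "countable phi_sing" "countable psi_sing"
    unfolding phi_sing_def psi_sing_def by (intro countable_insert countable_image countable_SIGMA; simp)+
  then show "open (- phi_sing)" "connected (- phi_sing)" "open (- psi_sing)" "connected (- psi_sing)"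
    using closed_phi_sing closed_psi_sing connected_open_diff_countable[of UNIV phi_sing]
      connected_open_diff_countable[of UNIV psi_sing]
    by (auto simp: Compl_eq_Diff_UNIV open_Diff)
qed

lemma phi_sing_memI: "k \<in> {1..N} \<Longrightarrow> j \<ge> 1 \<Longrightarrow> complex_of_real (a k / q ^ j) \<in> phi_sing"
  unfolding phi_sing_def by (rule insertI2, rule image_eqI[where x="(k,j)"]) auto

lemma psi_sing_memI: "k \<in> {1..N} \<Longrightarrow> complex_of_real (al k * q ^ j) \<in> psi_sing"
  unfolding psi_sing_def by (rule insertI2, rule image_eqI[where x="(k,j)"]) auto

lemma a_poles_memI: "k \<in> {1..N} \<Longrightarrow> complex_of_real (a k) \<in> a_poles"
  unfolding a_poles_def by auto

lemma a_pole_not_in_phi_sing: "p \<in> a_poles \<Longrightarrow> p \<notin> phi_sing"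
proof
  assume p: "p \<in> a_poles" "p \<in> phi_sing"
  then obtain i where i: "i \<in> {1..N}" "p = of_real (a i)" unfolding a_poles_def by auto
  have "p \<noteq> 0" using i a_bounds[OF i(1)] almax_amin by auto
  then obtain k j where "k \<in> {1..N}" "j \<ge> 1" "p = of_real (a k / q ^ j)"
    using p(2) unfolding phi_sing_def by auto
  then show False using D(3)[OF i(1)] D(6) i by force
qed

lemma qpoch_a_neq_0:
  assumes "v \<notin> phi_sing" "k \<in> {1..N}"
  shows "qpoch (of_real q * v / of_real (a k)) q \<noteq> 0"
proof
  assume "qpoch (of_real q * v / of_real (a k)) q = 0"
  then obtain n where n: "of_real q * v / of_real (a k) = 1 / of_real q ^ n"
    using qpoch_eq_0_iff[OF q] by auto
  have "a k \<noteq> 0" using a_pos[OF assms(2)] by simp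
  then have "v = of_real (a k / q ^ Suc n)" using n q by (simp add: field_simps)
  then show False using assms phi_sing_memI[of k "Suc n"] by auto
qed

lemma qpoch_al_neq_0:
  assumes "z \<notin> psi_sing" "k \<in> {1..N}"
  shows "qpoch (of_real q * of_real (al k) / z) q \<noteq> 0"
proof
  assume "qpoch (of_real q * of_real (al k) / z) q = 0"
  then obtain n where n: "of_real q * of_real (al k) / z = 1 / of_real q ^ n"
    using qpoch_eq_0_iff[OF q] by auto
  have "z \<noteq> 0" using assms(1) unfolding psi_sing_def by auto
  then have "z = of_real (al k * q ^ Suc n)" using n q by (simp add: field_simps)
  then show False using assms psi_sing_memI[of k "Suc n"] by auto
qed

definition phi_integrand :: "int \<Rightarrow> complex \<Rightarrow> complex" where
  "phi_integrand n v = exp (- v * of_real t) / v powi (n + int N) * (1 / (v - of_real (a (l+1))))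
     * (\<Prod>j=1..l. (v - of_real (al j)) / (v - of_real (a j)))
     * (\<Prod>k=1..N. qpoch (of_real q * of_real (al k) / v) q / qpoch (of_real q * v / of_real (a k)) q)"

definition psi_integrand :: "int \<Rightarrow> complex \<Rightarrow> complex" where
  "psi_integrand n z = (1 / z) * exp (z * of_real t) * z powi (n + int N) / (z - of_real (al (m+1)))
     * (\<Prod>j=1..m. (z - of_real (a j)) / (z - of_real (al j)))
     * (\<Prod>k=1..N. qpoch (of_real q * z / of_real (a k)) q / qpoch (of_real q * of_real (al k) / z) q)"

lemma phi_integrand_eq: "v \<noteq> 0 \<Longrightarrow> phi_integrand n v = phi_integrand 0 v / v powi n"
  unfolding phi_integrand_def by (simp add: power_int_add field_simps)

lemma psi_integrand_eq: "z \<noteq> 0 \<Longrightarrow> psi_integrand n z = psi_integrand 0 z * z powi n"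
  unfolding psi_integrand_def by (simp add: power_int_add field_simps)

lemma not_in_phi_sing: "v \<notin> phi_sing \<Longrightarrow> v \<noteq> 0"
  unfolding phi_sing_def by auto

lemma not_in_a_poles: "v \<notin> a_poles \<Longrightarrow> k \<in> {1..N} \<Longrightarrow> v \<noteq> of_real (a k)"
  unfolding a_poles_def by auto

lemma not_in_psi_sing: "z \<notin> psi_sing \<Longrightarrow> z \<noteq> 0" "z \<notin> psi_sing \<Longrightarrow> k \<in> {1..N} \<Longrightarrow> z \<noteq> of_real (al k)"
  using psi_sing_memI[of k 0] unfolding psi_sing_def by auto

lemma holomorphic_phi_integrand: "phi_integrand n holomorphic_on - phi_sing - a_poles"
  unfolding phi_integrand_def using lm q
  by (intro holomorphic_intros) (auto simp: not_in_phi_sing not_in_a_poles qpoch_a_neq_0 dest: a_pos)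

lemma holomorphic_psi_integrand: "psi_integrand n holomorphic_on - psi_sing"
  unfolding psi_integrand_def using lm q
  by (intro holomorphic_intros) (auto simp: not_in_psi_sing qpoch_al_neq_0 dest: a_pos)

lemma eps_exists:
  "\<exists>e. 0 < e \<and> e \<le> 1 \<and> e \<le> gap / 4 \<and>
     (\<forall>p\<in>a_poles. \<forall>x\<in>phi_sing \<union> a_poles. x \<noteq> p \<longrightarrow> e < dist p x)"
proof -
  obtain e where "e > 0" "\<And>p x. p \<in> a_poles \<Longrightarrow> x \<in> phi_sing \<union> a_poles \<Longrightarrow> x \<noteq> p \<Longrightarrow> e < dist p x"
    using finite_separated_from_closed[OF finite_a_poles closed_phi_sing] a_pole_not_in_phi_sing
    by blast
  then show ?thesis using gap_pos by (intro exI[of _ "min e (min 1 (gap / 4))"]) force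
qed

definition eps :: real where
  "eps = (SOME e. 0 < e \<and> e \<le> 1 \<and> e \<le> gap / 4 \<and>
     (\<forall>p\<in>a_poles. \<forall>x\<in>phi_sing \<union> a_poles. x \<noteq> p \<longrightarrow> e < dist p x))"

lemma eps_small: "0 < eps" "eps \<le> 1" "eps \<le> gap / 4"
  "\<And>p x. p \<in> a_poles \<Longrightarrow> x \<in> phi_sing \<union> a_poles \<Longrightarrow> x \<noteq> p \<Longrightarrow> eps < dist p x"
  using someI_ex[OF eps_exists] unfolding eps_def[symmetric] by auto

definition r_in :: real where "r_in = almax + gap / 2"
definition r_out :: real where "r_out = 3"

lemma r_in_r_out: "0 < r_in" "almax < r_in" "almax < r_out" "0 < r_out"
  using almax_amin gap_pos unfolding r_in_def r_out_def by linarith+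

lemma cball_pole:
  assumes p: "p \<in> a_poles" and v: "v \<in> cball p eps"
  shows "v \<notin> phi_sing" "v \<in> a_poles \<Longrightarrow> v = p" "almax + 3 * gap / 4 \<le> norm v" "norm v \<le> 2"
    "v \<notin> psi_sing" "v \<noteq> 0" "r_in < norm v" "norm v < r_out"
proof -
  have d: "dist p v \<le> eps" using v by simp
  show "v \<notin> phi_sing" using eps_small(4)[OF p, of v] d a_pole_not_in_phi_sing[OF p] by force
  show "v = p" if "v \<in> a_poles" using eps_small(4)[OF p, of v] d that by force
  have "norm p - dist p v \<le> norm v" using norm_triangle_ineq2[of p "p - v"] by (simp add: dist_norm)
  then show n: "almax + 3 * gap / 4 \<le> norm v"
    using a_poles_norm[OF p] d eps_small(3) gap_def by linarith
  have "norm v \<le> norm p + dist p v" using norm_triangle_ineq4[of p "p - v"] by (simp add: dist_norm)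
  then show "norm v \<le> 2" using a_poles_norm[OF p] d eps_small(2) by linarith
  then show "norm v < r_out" unfolding r_out_def by simp
  show "r_in < norm v" using n gap_pos unfolding r_in_def by linarith
  then show "v \<noteq> 0" "v \<notin> psi_sing" using psi_sing_norm r_in_r_out by force+
qed

lemma sphere_pole:
  assumes "p \<in> a_poles" "v \<in> sphere p eps"
  shows "v \<notin> a_poles" "j \<in> {1..N} \<Longrightarrow> v \<noteq> of_real (a j) \<and> v \<noteq> of_real (al j)"
proof -
  show "v \<notin> a_poles" using cball_pole(2)[of p v] assms eps_small(1) by force
  then show "v \<noteq> of_real (a j) \<and> v \<noteq> of_real (al j)" if "j \<in> {1..N}"
    using cball_pole(5)[of p v] assms not_in_a_poles not_in_psi_sing(2) that by force
qed

subsection \<open>Reduction to circles\<close>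

lemma contour_integral_D_eq:
  "contour_integral D (phi_integrand n) = (\<Sum>p\<in>a_poles. contour_integral (circlepath p eps) (phi_integrand n))"
proof (rule contour_integral_eq_sum_circlepaths[OF open_connected_complements(1,2) finite_a_poles])
  show "a_poles \<subseteq> - phi_sing" using a_pole_not_in_phi_sing by auto
  show "phi_integrand n holomorphic_on - phi_sing - a_poles" by (rule holomorphic_phi_integrand)
  show "path_image D \<subseteq> - phi_sing - a_poles"
    using D(3,4,6) unfolding phi_sing_def a_poles_def by auto
  show "winding_number D w = 0" if "w \<notin> - phi_sing" for w
  proof -
    have "w \<notin> path_image D \<and> wn D w = 0" using that D(4,5,6) unfolding phi_sing_def by auto
    then show ?thesis using wn_eq_winding_number[OF D(1)] by auto
  qed
  show "winding_number D p = 1" if p: "p \<in> a_poles" for p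
  proof -
    obtain k where "k \<in> {1..N}" "p = of_real (a k)" using p unfolding a_poles_def by blast
    then show ?thesis using D(3) wn_eq_winding_number[OF D(1)] by metis
  qed
  show "cball p eps \<subseteq> - phi_sing" if "p \<in> a_poles" for p using cball_pole(1)[OF that] by blast
  show "p' = p" if "p \<in> a_poles" "p' \<in> a_poles" "p' \<in> cball p eps" for p p'
    using cball_pole(2) that by blast
qed (use D eps_small in auto)

lemma contour_integral_C_eq:
  assumes "almax < r"
  shows "contour_integral C (psi_integrand n) = contour_integral (circlepath 0 r) (psi_integrand n)"
proof (rule Cauchy_theorem_homologous[OF open_connected_complements(3,4) holomorphic_psi_integrand C(1,2)])
  show "path_image C \<subseteq> - psi_sing" using C(3,5) unfolding psi_sing_def by auto
  show "path_image (circlepath 0 r) \<subseteq> - psi_sing" using psi_sing_norm assms by fastforce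
  show "winding_number C w = winding_number (circlepath 0 r) w" if "w \<notin> - psi_sing" for w
  proof -
    have "w \<notin> path_image C \<and> wn C w = 1" using that C(3,4,5) unfolding psi_sing_def by auto
    then have "winding_number C w = 1" using wn_eq_winding_number[OF C(1)] by auto
    moreover have "winding_number (circlepath 0 r) w = 1"
      using psi_sing_norm[of w] that assms by (intro winding_number_circlepath) auto
    ultimately show ?thesis by simp
  qed
qed auto

definition psi_circle :: "int \<Rightarrow> complex" where
  "psi_circle n = contour_integral (circlepath 0 (if 0 \<le> n then r_in else r_out)) (psi_integrand n)"

lemma contour_integral_C_eq_psi_circle: "contour_integral C (psi_integrand n) = psi_circle n"
  unfolding psi_circle_def using r_in_r_out by (intro contour_integral_C_eq) auto

lemma continuous_on_sphere_psi_integrand: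
  "almax < r \<Longrightarrow> continuous_on (sphere 0 r) (psi_integrand n)"
  using sphere_disjoint_psi_sing
  by (intro holomorphic_on_imp_continuous_on holomorphic_on_subset[OF holomorphic_psi_integrand]) auto

lemma continuous_on_sphere_phi_integrand:
  "p \<in> a_poles \<Longrightarrow> continuous_on (sphere p eps) (phi_integrand n)"
  using cball_pole(1) sphere_pole(1)
  by (intro holomorphic_on_imp_continuous_on holomorphic_on_subset[OF holomorphic_phi_integrand]) auto

lemma psi_circle_nonneg: "psi_circle (int k) = contour_integral (circlepath 0 r_in) (psi_integrand (int k))"
  by (simp add: psi_circle_def)

lemma psi_circle_neg:
  "psi_circle (- int (Suc k)) = contour_integral (circlepath 0 r_out) (psi_integrand (- int (Suc k)))"
  by (simp add: psi_circle_def)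

subsection \<open>Summation over n\<close>

lemma norm_contour_integral_psi_integrand_le:
  assumes "almax < r"
  obtains M where "M > 0"
    "\<And>n. norm (contour_integral (circlepath 0 r) (psi_integrand n)) \<le> M * r powi n"
proof -
  have r: "0 < r" using assms almax_amin by linarith
  note cont = continuous_on_sphere_psi_integrand[OF assms]
  obtain MH where MH: "MH > 0" "\<And>z. z \<in> sphere 0 r \<Longrightarrow> norm (psi_integrand 0 z) \<le> MH"
    using continuous_on_sphere_bounded[OF cont] by blast
  have "norm (contour_integral (circlepath 0 r) (psi_integrand n)) \<le> MH * r powi n * (2 * pi * r)" for n
  proof (rule norm_contour_integral_circlepath_le[OF r cont])
    fix z :: complex assume z: "z \<in> sphere 0 r"
    then have "z \<noteq> 0" using r by auto
    then have "norm (psi_integrand n z) = norm (psi_integrand 0 z) * r powi n"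
      using z \<open>z \<noteq> 0\<close> by (subst psi_integrand_eq) (simp_all add: norm_mult norm_power_int)
    then show "norm (psi_integrand n z) \<le> MH * r powi n"
      using z MH r by (simp add: mult_right_mono)
  qed
  then show ?thesis using that[of "MH * (2 * pi * r)"] MH r by (simp add: ac_simps)
qed

definition psi_cauchy :: "real \<Rightarrow> complex \<Rightarrow> complex" where
  "psi_cauchy r v = contour_integral (circlepath 0 r) (\<lambda>z. v * psi_integrand 0 z / (z - v))"

lemma contour_integral_psi_integrand_divide:
  assumes "almax < r"
  shows "contour_integral (circlepath 0 r) (psi_integrand n) / v powi n =
         contour_integral (circlepath 0 r) (\<lambda>z. psi_integrand 0 z * (z / v) powi n)"
proof -
  have r: "0 < r" using assms almax_amin by linarith
  have "contour_integral (circlepath 0 r) (psi_integrand n) / v powi n =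
      contour_integral (circlepath 0 r) (\<lambda>z. psi_integrand n z / v powi n)"
    using continuous_on_sphere_psi_integrand[OF assms] r
    by (intro contour_integral_div[symmetric] contour_integrable_continuous_circlepath) auto
  also have "\<dots> = contour_integral (circlepath 0 r) (\<lambda>z. psi_integrand 0 z * (z / v) powi n)"
  proof (rule contour_integral_cong[OF refl])
    fix z assume "z \<in> path_image (circlepath 0 r)"
    then have "z \<noteq> 0" using r by auto
    then show "psi_integrand n z / v powi n = psi_integrand 0 z * (z / v) powi n"
      using psi_integrand_eq[of z n] by (simp add: power_int_divide_distrib)
  qed
  finally show ?thesis .
qed

lemma psi_circle_nonneg_sums:
  assumes v: "r_in < norm v"
  shows "(\<lambda>k. psi_circle (int k) / v powi int k) sums - psi_cauchy r_in v"
proof -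
  have cont: "continuous_on (sphere 0 r_in) (psi_integrand 0)"
    using continuous_on_sphere_psi_integrand r_in_r_out by blast
  have "psi_circle (int k) / v powi int k =
      contour_integral (circlepath 0 r_in) (\<lambda>z. psi_integrand 0 z * (z / v) ^ k)" for k
    using contour_integral_psi_integrand_divide[OF r_in_r_out(2), of "int k" v] by (simp add: psi_circle_nonneg)
  moreover have "(\<lambda>k. contour_integral (circlepath 0 r_in) (\<lambda>z. psi_integrand 0 z * (z / v) ^ k)) sums
      contour_integral (circlepath 0 r_in) (\<lambda>z. psi_integrand 0 z / (1 - z / v))"
  proof (rule contour_integral_circlepath_geometric_sums[where \<theta> = "r_in / norm v"])
    show "norm (z / v) \<le> r_in / norm v" if "z \<in> sphere 0 r_in" for z
      using that by (simp add: norm_divide)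
    show "continuous_on (sphere 0 r_in) (\<lambda>z. z / v)"
      using v r_in_r_out by (intro continuous_intros) auto
    show "r_in / norm v < 1" using v r_in_r_out by (simp add: divide_less_eq)
  qed (use r_in_r_out cont in auto)
  moreover have "contour_integral (circlepath 0 r_in) (\<lambda>z. psi_integrand 0 z / (1 - z / v)) =
      contour_integral (circlepath 0 r_in) (\<lambda>z. - (v * psi_integrand 0 z / (z - v)))"
  proof (rule contour_integral_cong[OF refl])
    fix z assume "z \<in> path_image (circlepath 0 r_in)"
    then have "z \<noteq> v" "v \<noteq> 0" using v r_in_r_out by auto
    then show "psi_integrand 0 z / (1 - z / v) = - (v * psi_integrand 0 z / (z - v))"
      by (simp add: field_simps)
  qed
  ultimately show ?thesis by (simp add: contour_integral_neg psi_cauchy_def)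
qed

lemma psi_circle_neg_sums:
  assumes v: "norm v < r_out"
  shows "(\<lambda>k. psi_circle (- int (Suc k)) / v powi (- int (Suc k))) sums psi_cauchy r_out v"
proof -
  have cont: "continuous_on (sphere 0 r_out) (psi_integrand 0)"
    using continuous_on_sphere_psi_integrand r_in_r_out by blast
  have "(z / v) powi (- int (Suc k)) = inverse ((z / v) ^ Suc k)" for z k
    by (simp only: power_int_minus power_int_of_nat)
  also have "inverse ((z / v) ^ Suc k) = (v / z) ^ Suc k" for z k
    by (simp only: power_inverse[symmetric] inverse_divide)
  finally have "psi_circle (- int (Suc k)) / v powi (- int (Suc k)) =
      contour_integral (circlepath 0 r_out) (\<lambda>z. psi_integrand 0 z * (v / z) * (v / z) ^ k)" for k
    unfolding psi_circle_neg using contour_integral_psi_integrand_divide[OF r_in_r_out(3), of "- int (Suc k)" v]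
    by (simp add: mult.assoc)
  moreover have "(\<lambda>k. contour_integral (circlepath 0 r_out) (\<lambda>z. psi_integrand 0 z * (v / z) * (v / z) ^ k)) sums
      contour_integral (circlepath 0 r_out) (\<lambda>z. psi_integrand 0 z * (v / z) / (1 - v / z))"
  proof (rule contour_integral_circlepath_geometric_sums[where \<theta> = "norm v / r_out"])
    show "norm (v / z) \<le> norm v / r_out" if "z \<in> sphere 0 r_out" for z
      using that by (simp add: norm_divide)
    show "continuous_on (sphere 0 r_out) (\<lambda>z. psi_integrand 0 z * (v / z))"
      "continuous_on (sphere 0 r_out) (\<lambda>z. v / z)"
      using r_in_r_out by (auto intro!: continuous_intros cont)
    show "norm v / r_out < 1" using v r_in_r_out by (simp add: divide_less_eq)
  qed (use r_in_r_out in auto)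
  moreover have "contour_integral (circlepath 0 r_out) (\<lambda>z. psi_integrand 0 z * (v / z) / (1 - v / z)) =
      contour_integral (circlepath 0 r_out) (\<lambda>z. v * psi_integrand 0 z / (z - v))"
  proof (rule contour_integral_cong[OF refl])
    fix z assume "z \<in> path_image (circlepath 0 r_out)"
    then have "z \<noteq> v" "z \<noteq> 0" using v r_in_r_out by auto
    then show "psi_integrand 0 z * (v / z) / (1 - v / z) = v * psi_integrand 0 z / (z - v)"
      by (simp add: field_simps)
  qed
  ultimately show ?thesis by (simp add: psi_cauchy_def)
qed

lemma Cauchy_integral_formula_annulus:
  assumes v: "r_in < norm v" "norm v < r_out"
  shows "psi_cauchy r_out v - psi_cauchy r_in v = 2 * pi * \<i> * (v * psi_integrand 0 v)"
proof -
  have v_psi: "v \<in> - psi_sing" using psi_sing_norm v r_in_r_out by force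
  have hol: "(\<lambda>z. v * psi_integrand 0 z) holomorphic_on - psi_sing"
    by (intro holomorphic_intros holomorphic_psi_integrand)
  have img: "path_image (circlepath 0 r_out) \<subseteq> - psi_sing - {v}"
    "path_image (circlepath 0 r_in) \<subseteq> - psi_sing - {v}"
    using sphere_disjoint_psi_sing[of r_out] sphere_disjoint_psi_sing[of r_in] r_in_r_out v by auto
  have wn: "winding_number (circlepath 0 r_out) w = winding_number (circlepath 0 r_in) w"
    if "w \<notin> - psi_sing" for w
    using psi_sing_norm[of w] that r_in_r_out by (simp add: winding_number_circlepath)
  have "winding_number (circlepath 0 r_out) v = 1"
    using v by (intro winding_number_circlepath) auto
  moreover have "winding_number (circlepath 0 r_in) v = 0"
    using v r_in_r_out by (intro winding_number_zero_outside[of _ "cball 0 r_in"]) auto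
  ultimately show ?thesis
    using Cauchy_integral_formula_homologous[OF open_connected_complements(3,4) hol v_psi
        valid_path_circlepath _ img(1) valid_path_circlepath _ img(2) wn]
    by (simp add: psi_cauchy_def)
qed

lemma contour_integral_pole_mult:
  assumes p: "p \<in> a_poles"
  shows "contour_integral (circlepath p eps) (phi_integrand n) * x =
         contour_integral (circlepath p eps) (\<lambda>v. phi_integrand 0 v * (x / v powi n))"
proof -
  have "contour_integral (circlepath p eps) (phi_integrand n) * x =
      contour_integral (circlepath p eps) (\<lambda>v. phi_integrand n v * x)"
    using continuous_on_sphere_phi_integrand[OF p] eps_small(1)
    by (intro contour_integral_rmul[symmetric] contour_integrable_continuous_circlepath) auto
  also have "\<dots> = contour_integral (circlepath p eps) (\<lambda>v. phi_integrand 0 v * (x / v powi n))"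
  proof (rule contour_integral_cong[OF refl])
    fix v assume "v \<in> path_image (circlepath p eps)"
    then have "v \<noteq> 0" using cball_pole(6)[OF p] eps_small(1) by auto
    then show "phi_integrand n v * x = phi_integrand 0 v * (x / v powi n)"
      using phi_integrand_eq[of v n] by simp
  qed
  finally show ?thesis .
qed

lemma contour_integral_pole_sums:
  assumes p: "p \<in> a_poles"
    and cont: "\<And>k. continuous_on (sphere p eps) (w k)"
    and bnd: "\<And>k v. v \<in> sphere p eps \<Longrightarrow> norm (w k v) \<le> B k" and B: "summable B"
    and T: "\<And>v. v \<in> sphere p eps \<Longrightarrow> (\<lambda>k. w k v) sums T v"
  shows "(\<lambda>k. contour_integral (circlepath p eps) (\<lambda>v. phi_integrand 0 v * w k v)) sums
           contour_integral (circlepath p eps) (\<lambda>v. phi_integrand 0 v * T v)" (is ?sums)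
    and "(\<lambda>v. phi_integrand 0 v * T v) contour_integrable_on circlepath p eps" (is ?integrable)
    and "summable (\<lambda>k. norm (contour_integral (circlepath p eps) (\<lambda>v. phi_integrand 0 v * w k v)))"
      (is ?summable)
proof -
  obtain ME where ME: "ME > 0" "\<And>v. v \<in> sphere p eps \<Longrightarrow> norm (phi_integrand 0 v) \<le> ME"
    using continuous_on_sphere_bounded[OF continuous_on_sphere_phi_integrand[OF p]] by blast
  have bnd': "norm (phi_integrand 0 v * w k v) \<le> ME * B k" if "v \<in> sphere p eps" for k v
    unfolding norm_mult using ME that bnd by (intro mult_mono) auto
  have cont': "continuous_on (sphere p eps) (\<lambda>v. phi_integrand 0 v * w k v)" for k
    by (intro continuous_intros continuous_on_sphere_phi_integrand[OF p] cont)
  have T': "(\<lambda>k. phi_integrand 0 v * w k v) sums (phi_integrand 0 v * T v)"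
    if "v \<in> sphere p eps" for v
    using T[OF that] by (rule sums_mult)
  note series = contour_integral_circlepath_sums[OF eps_small(1) cont' bnd' summable_mult[OF B] T']
  show ?sums by (rule series(1))
  show ?integrable by (rule series(2))
  show ?summable by (rule series(3))
qed

lemma pole_circle_nonneg_sums:
  assumes p: "p \<in> a_poles"
  shows "(\<lambda>k. contour_integral (circlepath p eps) (\<lambda>v. phi_integrand 0 v * (psi_circle (int k) / v powi int k)))
           sums contour_integral (circlepath p eps) (\<lambda>v. phi_integrand 0 v * - psi_cauchy r_in v)"
      (is ?sums)
    and "(\<lambda>v. phi_integrand 0 v * - psi_cauchy r_in v) contour_integrable_on circlepath p eps"
      (is ?integrable)
    and "summable (\<lambda>k. norm (contour_integral (circlepath p eps)
           (\<lambda>v. phi_integrand 0 v * (psi_circle (int k) / v powi int k))))"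
      (is ?summable)
proof -
  define r1 where "r1 = almax + 3 * gap / 4"
  have r1: "r_in < r1" using gap_pos unfolding r1_def r_in_def by simp
  obtain M where M: "M > 0" "\<And>n. norm (contour_integral (circlepath 0 r_in) (psi_integrand n)) \<le> M * r_in powi n"
    using norm_contour_integral_psi_integrand_le r_in_r_out(2) by blast
  have bound: "norm (psi_circle (int k) / v powi int k) \<le> M * (r_in / r1) ^ k"
    if v: "v \<in> sphere p eps" for k v
  proof -
    have "norm (psi_circle (int k) / v powi int k) = norm (psi_circle (int k)) / norm v ^ k"
      by (simp add: norm_divide norm_power)
    also have "\<dots> \<le> (M * r_in ^ k) / r1 ^ k"
      using M M(2)[of "int k"] cball_pole(3,7)[OF p, of v] v eps_small(1) r1 r_in_r_out
      by (intro frac_le power_mono) (auto simp: psi_circle_nonneg r1_def)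
    finally show ?thesis by (simp add: power_divide)
  qed
  have summable: "summable (\<lambda>k. M * (r_in / r1) ^ k)"
    using r1 r_in_r_out by (intro summable_mult summable_geometric) auto
  have cont: "continuous_on (sphere p eps) (\<lambda>v. psi_circle (int k) / v powi int k)" for k
    using cball_pole(6)[OF p] eps_small(1) by (auto intro!: continuous_intros)
  have sums: "(\<lambda>k. psi_circle (int k) / v powi int k) sums - psi_cauchy r_in v"
    if "v \<in> sphere p eps" for v
    using cball_pole(7)[OF p, of v] that eps_small(1) by (intro psi_circle_nonneg_sums) auto
  note series = contour_integral_pole_sums[OF p cont bound summable sums]
  show ?sums by (rule series(1))
  show ?integrable by (rule series(2))
  show ?summable by (rule series(3))
qed

lemma pole_circle_neg_sums:
  assumes p: "p \<in> a_poles"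
  shows "(\<lambda>k. contour_integral (circlepath p eps)
            (\<lambda>v. phi_integrand 0 v * (psi_circle (- int (Suc k)) / v powi (- int (Suc k)))))
           sums contour_integral (circlepath p eps) (\<lambda>v. phi_integrand 0 v * psi_cauchy r_out v)"
      (is ?sums)
    and "(\<lambda>v. phi_integrand 0 v * psi_cauchy r_out v) contour_integrable_on circlepath p eps"
      (is ?integrable)
    and "summable (\<lambda>k. norm (contour_integral (circlepath p eps)
           (\<lambda>v. phi_integrand 0 v * (psi_circle (- int (Suc k)) / v powi (- int (Suc k))))))"
      (is ?summable)
proof -
  obtain M where M: "M > 0" "\<And>n. norm (contour_integral (circlepath 0 r_out) (psi_integrand n)) \<le> M * r_out powi n"
    using norm_contour_integral_psi_integrand_le r_in_r_out(3) by blast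
  have term_eq: "psi_circle (- int (Suc k)) / v powi (- int (Suc k)) = psi_circle (- int (Suc k)) * v ^ Suc k"
    for k v by (simp only: power_int_minus power_int_of_nat divide_inverse inverse_inverse_eq)
  have bound: "norm (psi_circle (- int (Suc k)) / v powi (- int (Suc k))) \<le> M * (2 / r_out) ^ Suc k"
    if v: "v \<in> sphere p eps" for k v
  proof -
    have "norm (psi_circle (- int (Suc k))) \<le> M / r_out ^ Suc k"
      using M(2)[of "- int (Suc k)"]
      by (simp only: psi_circle_neg[symmetric] power_int_minus power_int_of_nat divide_inverse)
    moreover have "norm v ^ Suc k \<le> 2 ^ Suc k"
      using cball_pole(4)[OF p, of v] v eps_small(1) by (intro power_mono) auto
    ultimately have "norm (psi_circle (- int (Suc k))) * norm v ^ Suc k \<le> (M / r_out ^ Suc k) * 2 ^ Suc k"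
      using M r_in_r_out by (intro mult_mono) auto
    then show ?thesis by (simp only: term_eq norm_mult norm_power) (simp add: power_divide)
  qed
  have summable: "summable (\<lambda>k. M * (2 / r_out) ^ Suc k)"
    unfolding r_out_def by (intro summable_mult summable_geometric summable_Suc_iff[THEN iffD2]) auto
  have cont: "continuous_on (sphere p eps) (\<lambda>v. psi_circle (- int (Suc k)) / v powi (- int (Suc k)))"
    for k unfolding term_eq by (intro continuous_intros)
  have sums: "(\<lambda>k. psi_circle (- int (Suc k)) / v powi (- int (Suc k))) sums psi_cauchy r_out v"
    if "v \<in> sphere p eps" for v
    using cball_pole(8)[OF p, of v] that eps_small(1) by (intro psi_circle_neg_sums) auto
  note series = contour_integral_pole_sums[OF p cont bound summable sums]
  show ?sums by (rule series(1))
  show ?integrable by (rule series(2))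
  show ?summable by (rule series(3))
qed

lemma pole_circle_has_sum:
  assumes p: "p \<in> a_poles"
  shows "((\<lambda>n. contour_integral (circlepath p eps) (phi_integrand n) * psi_circle n) has_sum
           contour_integral (circlepath p eps) (\<lambda>v. phi_integrand 0 v * (2 * pi * \<i> * (v * psi_integrand 0 v)))) UNIV"
proof -
  note nonneg = pole_circle_nonneg_sums[OF p] and neg = pole_circle_neg_sums[OF p]
  have "((\<lambda>n. contour_integral (circlepath p eps) (phi_integrand n) * psi_circle n) has_sum
      (contour_integral (circlepath p eps) (\<lambda>v. phi_integrand 0 v * - psi_cauchy r_in v) +
       contour_integral (circlepath p eps) (\<lambda>v. phi_integrand 0 v * psi_cauchy r_out v))) UNIV"
    by (rule has_sum_int_split) (use nonneg neg in \<open>simp_all only: contour_integral_pole_mult[OF p]\<close>)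
  also have "contour_integral (circlepath p eps) (\<lambda>v. phi_integrand 0 v * - psi_cauchy r_in v) +
      contour_integral (circlepath p eps) (\<lambda>v. phi_integrand 0 v * psi_cauchy r_out v) =
      contour_integral (circlepath p eps) (\<lambda>v. phi_integrand 0 v * (psi_cauchy r_out v - psi_cauchy r_in v))"
    using nonneg(2) neg(2) by (simp add: contour_integral_add[symmetric] algebra_simps)
  also have "\<dots> = contour_integral (circlepath p eps)
      (\<lambda>v. phi_integrand 0 v * (2 * pi * \<i> * (v * psi_integrand 0 v)))"
    using cball_pole(7,8)[OF p] eps_small(1)
    by (intro contour_integral_cong refl) (auto simp: Cauchy_integral_formula_annulus)
  finally show ?thesis .
qed

subsection \<open>The rational function\<close>

definition rational_part :: "complex \<Rightarrow> complex" where
  "rational_part v = 1 / (v - of_real (a (l+1))) * (1 / (v - of_real (al (m+1))))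
     * (\<Prod>j=1..l. (v - of_real (al j)) / (v - of_real (a j)))
     * (\<Prod>j=1..m. (v - of_real (a j)) / (v - of_real (al j)))"

lemma phi_psi_integrand_product:
  assumes v: "v \<notin> phi_sing" "v \<notin> psi_sing"
  shows "phi_integrand 0 v * (v * psi_integrand 0 v) = rational_part v"
proof -
  define QA where "QA = (\<Prod>k=1..N. qpoch (of_real q * of_real (al k) / v) q / qpoch (of_real q * v / of_real (a k)) q)"
  define QB where "QB = (\<Prod>k=1..N. qpoch (of_real q * v / of_real (a k)) q / qpoch (of_real q * of_real (al k) / v) q)"
  have "QA * QB = 1"
    unfolding QA_def QB_def prod.distrib[symmetric] using qpoch_a_neq_0[OF v(1)] qpoch_al_neq_0[OF v(2)]
    by (intro prod.neutral) auto
  moreover have "exp (- v * of_real t) * exp (v * of_real t) = 1" by (simp add: exp_minus field_simps)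
  moreover have "v \<noteq> 0" using not_in_phi_sing[OF v(1)] .
  moreover have "phi_integrand 0 v * (v * psi_integrand 0 v) = rational_part v
      * (exp (- v * of_real t) * exp (v * of_real t)) * (QA * QB) * (v * (1 / v)) * (v ^ N * (1 / v ^ N))"
    unfolding phi_integrand_def psi_integrand_def rational_part_def QA_def QB_def
    by (simp add: divide_inverse ac_simps)
  ultimately show ?thesis by simp
qed

lemma rational_part_upper:
  assumes "l \<le> m" "\<And>j. j \<in> {1..N} \<Longrightarrow> v \<noteq> of_real (a j) \<and> v \<noteq> of_real (al j)"
  shows "rational_part v = 1 / (v - of_real (a (l+1))) * (1 / (v - of_real (al (m+1))))
     * (\<Prod>j=Suc l..m. (v - of_real (a j)) / (v - of_real (al j)))"
  unfolding rational_part_def mult.assoc[of _ "\<Prod>j=1..l. _"]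
  using prod_divide_mult_prod_divide[OF assms(1), of "\<lambda>j. v - of_real (al j)" "\<lambda>j. v - of_real (a j)"]
    assms(2) lm by simp

lemma rational_part_lower:
  assumes "m \<le> l" "\<And>j. j \<in> {1..N} \<Longrightarrow> v \<noteq> of_real (a j) \<and> v \<noteq> of_real (al j)"
  shows "rational_part v = 1 / (v - of_real (a (l+1))) * (1 / (v - of_real (al (m+1))))
     * (\<Prod>j=Suc m..l. (v - of_real (al j)) / (v - of_real (a j)))"
  unfolding rational_part_def mult.assoc[of _ "\<Prod>j=1..l. _"]
  using prod_divide_mult_prod_divide[OF assms(1), of "\<lambda>j. v - of_real (a j)" "\<lambda>j. v - of_real (al j)"]
    assms(2) lm by (simp add: mult.commute)

lemma holomorphic_rational_part: "rational_part holomorphic_on - (a_poles \<union> psi_sing)"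
  unfolding rational_part_def using lm
  by (intro holomorphic_intros) (auto simp: not_in_a_poles not_in_psi_sing)

lemma contour_integrable_rational_part:
  "p \<in> a_poles \<Longrightarrow> rational_part contour_integrable_on circlepath p eps"
  using cball_pole(5) sphere_pole(1) eps_small(1)
  by (intro contour_integrable_continuous_circlepath holomorphic_on_imp_continuous_on
      holomorphic_on_subset[OF holomorphic_rational_part]) auto

lemma dist_pole_al: "p \<in> a_poles \<Longrightarrow> k \<in> {1..N} \<Longrightarrow> gap \<le> dist p (of_real (al k))"
  using a_poles_norm(1)[of p] al_bounds[of k] norm_triangle_ineq2[of p "of_real (al k)"]
  by (simp add: dist_norm gap_def)

lemma sum_rational_part_diagonal:
  assumes "l = m"
  shows "of_real (a (m+1) - al (m+1)) * (\<Sum>p\<in>a_poles. contour_integral (circlepath p eps) rational_part)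
    = 2 * pi * \<i>"
proof -
  define A where "A = complex_of_real (a (m+1))"
  define \<alpha> where "\<alpha> = complex_of_real (al (m+1))"
  have m1: "m + 1 \<in> {1..N}" using lm by auto
  have A: "A \<in> a_poles" unfolding A_def using a_poles_memI[OF m1] .
  have partial_fractions: "of_real (a (m+1) - al (m+1)) * rational_part v = 1 / (v - A) - 1 / (v - \<alpha>)"
    if "p \<in> a_poles" "v \<in> sphere p eps" for p v
  proof -
    have "v - A \<noteq> 0" "v - \<alpha> \<noteq> 0" using sphere_pole(2)[OF that m1] unfolding A_def \<alpha>_def by auto
    moreover have "rational_part v = 1 / (v - A) * (1 / (v - \<alpha>))"
      using rational_part_upper[of v] sphere_pole(2)[OF that] assms unfolding A_def \<alpha>_def by simp
    ultimately show ?thesis unfolding A_def \<alpha>_def by (simp add: field_simps)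
  qed
  have "contour_integral (circlepath p eps) (\<lambda>v. of_real (a (m+1) - al (m+1)) * rational_part v)
      = (if p = A then 2 * pi * \<i> else 0)" if p: "p \<in> a_poles" for p
  proof -
    have "\<alpha> \<notin> sphere p eps" "\<not> dist p \<alpha> < eps"
      using dist_pole_al[OF p m1] eps_small(3) gap_pos unfolding \<alpha>_def gap_def by auto
    moreover have "A \<notin> sphere p eps \<and> (dist p A < eps \<longleftrightarrow> p = A)"
      using eps_small(1) eps_small(4)[OF p, of A] A by (cases "A = p") auto
    moreover have "contour_integral (circlepath p eps) (\<lambda>v. of_real (a (m+1) - al (m+1)) * rational_part v)
        = contour_integral (circlepath p eps) (\<lambda>v. 1 / (v - A) - 1 / (v - \<alpha>))"
      using partial_fractions[OF p] eps_small(1) by (intro contour_integral_cong) auto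
    ultimately show ?thesis
      using eps_small(1) by (simp add: contour_integral_diff contour_integrable_inversediff
          contour_integral_circlepath_inverse)
  qed
  moreover have "of_real (a (m+1) - al (m+1)) * contour_integral (circlepath p eps) rational_part =
      contour_integral (circlepath p eps) (\<lambda>v. of_real (a (m+1) - al (m+1)) * rational_part v)"
    if "p \<in> a_poles" for p
    using contour_integrable_rational_part[OF that] by (rule contour_integral_lmul[symmetric])
  ultimately show ?thesis
    unfolding sum_distrib_left using A finite_a_poles by (simp add: sum.delta)
qed

lemma contour_integral_rational_part_upper:
  assumes lm_lt: "l < m" and p: "p \<in> a_poles"
  shows "contour_integral (circlepath p eps) rational_part = 0"
proof -
  define R where "R v = 1 / (v - of_real (al (m+1))) * (1 / (v - of_real (al (l+1)))
      * (\<Prod>j=Suc (Suc l)..m. (v - of_real (a j)) / (v - of_real (al j))))" for v :: complex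
  have eq: "rational_part v = R v" if v: "v \<in> sphere p eps" for v
  proof -
    note ne = sphere_pole(2)[OF p v]
    define X where "X = (\<Prod>j=Suc (Suc l)..m. (v - of_real (a j)) / (v - of_real (al j)))"
    have "(\<Prod>j=Suc l..m. (v - of_real (a j)) / (v - of_real (al j))) =
        (v - of_real (a (Suc l))) / (v - of_real (al (Suc l))) * X"
      unfolding X_def using lm_lt by (intro prod.atLeast_Suc_atMost) auto
    then have "rational_part v = 1 / (v - of_real (a (Suc l))) * (1 / (v - of_real (al (Suc m))))
        * ((v - of_real (a (Suc l))) / (v - of_real (al (Suc l))) * X)"
      using rational_part_upper[of v] ne lm_lt by simp
    also have "\<dots> = 1 / (v - of_real (al (Suc m))) * (1 / (v - of_real (a (Suc l)))
        * ((v - of_real (a (Suc l))) / (v - of_real (al (Suc l))) * X))"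
      by (simp only: mult_ac)
    also have "\<dots> = R v"
      unfolding R_def X_def[symmetric] using ne[of "Suc l"] lm
      by (subst one_divide_mult_divide_cancel) auto
    finally show ?thesis .
  qed
  have "(R has_contour_integral 0) (circlepath p eps)"
  proof (rule Cauchy_theorem_convex_simple[OF _ convex_ball valid_path_circlepath])
    have "v \<noteq> of_real (al j)" if "v \<in> ball p gap" "j \<in> {1..N}" for v j
    proof -
      have "norm p - dist p v \<le> norm v" using norm_triangle_ineq2[of p "p - v"] by (simp add: dist_norm)
      then have "almax < norm v" using that(1) a_poles_norm(1)[OF p] gap_def by simp
      then show ?thesis using al_bounds[OF that(2)] by auto
    qed
    then show "R holomorphic_on ball p gap"
      unfolding R_def using lm lm_lt by (intro holomorphic_intros) auto
    show "path_image (circlepath p eps) \<subseteq> ball p gap"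
      using eps_small(1,3) gap_pos by auto
  qed simp
  moreover have "contour_integral (circlepath p eps) rational_part = contour_integral (circlepath p eps) R"
    using eq eps_small(1) by (intro contour_integral_cong) auto
  ultimately show ?thesis using contour_integral_unique by simp
qed

lemma far_from_poles_bounds:
  fixes v :: complex
  assumes "2 \<le> norm v" "j \<in> {1..N}"
  shows "norm (1 / (v - of_real (a j))) \<le> 2 / norm v"
    and "norm ((v - of_real (al j)) / (v - of_real (a j))) \<le> 3"
proof -
  have "a j \<le> 1" "0 \<le> al j" "al j \<le> 1" using aal[OF assms(2,2)] by auto
  then have "norm (of_real (a j) :: complex) \<le> 1" "norm (of_real (al j) :: complex) \<le> 1"
    using a_pos[OF assms(2)] by auto
  moreover note norm_triangle_ineq2[of v "of_real (a j)"] norm_triangle_ineq4[of v "of_real (al j)"]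
  ultimately have lo: "norm v / 2 \<le> norm (v - of_real (a j))" and hi: "norm (v - of_real (al j)) \<le> norm v + 1"
    using assms(1) by linarith+
  have pos: "0 < norm (v - of_real (a j))" using lo assms(1) by linarith
  have "1 / norm (v - of_real (a j)) \<le> 1 / (norm v / 2)"
    using lo assms(1) pos by (intro divide_left_mono mult_pos_pos) auto
  then show "norm (1 / (v - of_real (a j))) \<le> 2 / norm v" by (simp add: norm_divide)
  have "norm (v - of_real (al j)) \<le> 3 * norm (v - of_real (a j))" using lo hi assms(1) by linarith
  then show "norm ((v - of_real (al j)) / (v - of_real (a j))) \<le> 3"
    using pos by (simp add: norm_divide divide_le_eq)
qed

lemma sum_rational_part_lower:
  assumes lm_gt: "m < l"
  shows "(\<Sum>p\<in>a_poles. contour_integral (circlepath p eps) rational_part) = 0"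
proof -
  define R where "R v = 1 / (v - of_real (a (l+1))) * (1 / (v - of_real (a (m+1)))
      * (\<Prod>j=Suc (Suc m)..l. (v - of_real (al j)) / (v - of_real (a j))))" for v :: complex
  have "rational_part v = R v" if p: "p \<in> a_poles" and v: "v \<in> sphere p eps" for p v
  proof -
    note ne = sphere_pole(2)[OF p v]
    define X where "X = (\<Prod>j=Suc (Suc m)..l. (v - of_real (al j)) / (v - of_real (a j)))"
    have "(\<Prod>j=Suc m..l. (v - of_real (al j)) / (v - of_real (a j))) =
        (v - of_real (al (Suc m))) / (v - of_real (a (Suc m))) * X"
      unfolding X_def using lm_gt by (intro prod.atLeast_Suc_atMost) auto
    then have "rational_part v = 1 / (v - of_real (a (Suc l))) * (1 / (v - of_real (al (Suc m))))
        * ((v - of_real (al (Suc m))) / (v - of_real (a (Suc m))) * X)"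
      using rational_part_lower[of v] ne lm_gt by simp
    also have "\<dots> = R v"
      unfolding R_def X_def[symmetric] mult.assoc[of "1 / (v - of_real (a (Suc l)))"] using ne[of "Suc m"] lm
      by (subst one_divide_mult_divide_cancel) auto
    finally show ?thesis .
  qed
  then have "(\<Sum>p\<in>a_poles. contour_integral (circlepath p eps) rational_part) =
      (\<Sum>p\<in>a_poles. contour_integral (circlepath p eps) R)"
    using eps_small(1) by (intro sum.cong refl contour_integral_cong) auto
  also have "\<dots> = 0"
  proof (rule sum_contour_integral_circlepaths_eq_0[OF finite_a_poles _ _ eps_small(1), where r_min = 2])
    show "a_poles \<subseteq> ball 0 2" using a_poles_norm(2) by fastforce
    show "R holomorphic_on - a_poles"
      unfolding R_def using lm lm_gt by (intro holomorphic_intros) (auto simp: not_in_a_poles)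
    show "p' = p" if "p \<in> a_poles" "p' \<in> a_poles" "p' \<in> cball p eps" for p p'
      using cball_pole(2) that by blast
    show "norm (R v) \<le> 4 * 3 ^ N / norm v ^ 2" if v: "2 \<le> norm v" for v
    proof -
      have "norm (\<Prod>j=Suc (Suc m)..l. (v - of_real (al j)) / (v - of_real (a j))) \<le> (\<Prod>j=Suc (Suc m)..l. 3)"
        unfolding prod_norm[symmetric] using lm far_from_poles_bounds(2)[OF v] by (intro prod_mono) auto
      also have "\<dots> \<le> 3 ^ N" using lm by (simp add: power_increasing)
      finally have "norm (R v) \<le> (2 / norm v) * ((2 / norm v) * 3 ^ N)"
        unfolding R_def norm_mult using lm far_from_poles_bounds(1)[OF v]
        by (intro mult_mono) auto
      then show ?thesis by (simp add: power2_eq_square)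
    qed
  qed
  finally show ?thesis .
qed

lemma sum_rational_part:
  "of_real (a (m+1) - al (m+1)) * (\<Sum>p\<in>a_poles. contour_integral (circlepath p eps) rational_part)
     = 2 * pi * \<i> * (if l = m then 1 else 0)"
  using sum_rational_part_diagonal sum_rational_part_lower contour_integral_rational_part_upper
  by (cases l m rule: linorder_cases) auto

definition phi0 :: "int \<Rightarrow> complex" where
  "phi0 n = contour_integral D (phi_integrand n) / (2 * pi * \<i>)"

definition psi0 :: "int \<Rightarrow> complex" where
  "psi0 n = of_real (a (m+1) - al (m+1)) * contour_integral C (psi_integrand n) / (2 * pi * \<i>)"

theorem has_sum_phi0_psi0: "((\<lambda>n. phi0 n * psi0 n) has_sum (if l = m then 1 else 0)) UNIV"
proof -
  define K where "K = of_real (a (m+1) - al (m+1)) / (2 * pi * \<i>) ^ 2"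
  have eq: "phi0 n * psi0 n =
      K * (\<Sum>p\<in>a_poles. contour_integral (circlepath p eps) (phi_integrand n) * psi_circle n)" for n
  proof -
    have "phi0 n * psi0 n =
        K * ((\<Sum>p\<in>a_poles. contour_integral (circlepath p eps) (phi_integrand n)) * psi_circle n)"
      unfolding phi0_def psi0_def K_def contour_integral_D_eq contour_integral_C_eq_psi_circle
      by (simp add: power2_eq_square field_simps)
    then show ?thesis by (simp add: sum_distrib_right)
  qed
  have hs: "((\<lambda>n. \<Sum>p\<in>a_poles. contour_integral (circlepath p eps) (phi_integrand n) * psi_circle n)
      has_sum (\<Sum>p\<in>a_poles. contour_integral (circlepath p eps) (\<lambda>v. 2 * pi * \<i> * rational_part v))) UNIV"
  proof (rule has_sum_sum[OF finite_a_poles])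
    fix p assume p: "p \<in> a_poles"
    have "contour_integral (circlepath p eps) (\<lambda>v. phi_integrand 0 v * (2 * pi * \<i> * (v * psi_integrand 0 v)))
        = contour_integral (circlepath p eps) (\<lambda>v. 2 * pi * \<i> * rational_part v)"
      using p eps_small(1) cball_pole(1,5) phi_psi_integrand_product
      by (intro contour_integral_cong) (auto simp flip: phi_psi_integrand_product)
    then show "((\<lambda>n. contour_integral (circlepath p eps) (phi_integrand n) * psi_circle n) has_sum
        contour_integral (circlepath p eps) (\<lambda>v. 2 * pi * \<i> * rational_part v)) UNIV"
      using pole_circle_has_sum[OF p] by simp
  qed
  have val: "K * (\<Sum>p\<in>a_poles. contour_integral (circlepath p eps) (\<lambda>v. 2 * pi * \<i> * rational_part v))
      = (if l = m then 1 else 0)"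
    using sum_rational_part contour_integrable_rational_part
    by (simp add: K_def contour_integral_lmul sum_distrib_left[symmetric] power2_eq_square)
  show ?thesis unfolding eq val[symmetric] by (rule has_sum_cmult_right[OF hs])
qed

lemma phi_eq: "phi q N t a al b c D l n = of_real (tau b c n) * phi0 n"
  unfolding phi_def phi0_def phi_integrand_def cint_eq_contour_integral by simp

lemma psi_eq: "psi q N t a al b c C m n = psi0 n / of_real (tau b c n)"
  unfolding psi_def psi0_def psi_integrand_def cint_eq_contour_integral by (simp add: field_simps)

end

theorem mainTheorem11:
  fixes q t b c :: real and N :: nat and a al :: "nat \<Rightarrow> real"
    and D C :: "real \<Rightarrow> complex" and l m :: nat
  assumes q: "0 < q" "q < 1" and N: "N \<ge> 1" and t: "t > 0"
    and aal: "\<And>i j. i \<in> {1..N} \<Longrightarrow> j \<in> {1..N} \<Longrightarrow> 0 \<le> al i \<and> al i < a j \<and> a j \<le> 1"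
    and b: "\<And>i. i \<in> {1..N} \<Longrightarrow> al i < b" "\<And>i. i \<in> {1..N} \<Longrightarrow> b < a i"
    and c: "1 < c"
    and D: "valid_path D" "simple_path D" "pathfinish D = pathstart D"
      "\<And>i. i \<in> {1..N} \<Longrightarrow> of_real (a i) \<notin> path_image D \<and> wn D (of_real (a i)) = 1"
      "0 \<notin> path_image D" "wn D 0 = 0"
      "\<And>k j. k \<in> {1..N} \<Longrightarrow> j \<ge> 1 \<Longrightarrow>
         of_real (a k / q ^ j) \<notin> path_image D \<and> wn D (of_real (a k / q ^ j)) = 0"
    and C: "valid_path C" "simple_path C" "pathfinish C = pathstart C"
      "0 \<notin> path_image C" "wn C 0 = 1"
      "\<And>i j. i \<in> {1..N} \<Longrightarrow>
         of_real (al i * q ^ j) \<notin> path_image C \<and> wn C (of_real (al i * q ^ j)) = 1"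
    and lm: "l < N" "m < N"
  shows "((\<lambda>n. phi q N t a al b c D l n * psi q N t a al b c C m n) has_sum
            (if l = m then 1 else 0)) UNIV"
proof -
  interpret biorthogonality q t N a al D C l m
    by unfold_locales (use q aal D(1,3-7) C(1,3-6) lm in auto)
  have "0 < b" using b(1)[of 1] aal[of 1 1] N by force
  then have "tau b c n \<noteq> 0" for n using c unfolding tau_def by auto
  then have "phi q N t a al b c D l n * psi q N t a al b c C m n = phi0 n * psi0 n" for n
    by (simp add: phi_eq psi_eq)
  then show ?thesis using has_sum_phi0_psi0 by simp
qed

end
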